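(* Suppose $G=(V,E)$ is a complete graph whose nonnegative edge costs $c$ satisfy the triangle inequality, and let $R\subseteq V$ be the terminal set. Then the cost of a minimum spanning tree of the induced subgraph $G[R]$ is at most twice the optimal value of the hypergraphic LP \[ \min \sum_K C_K x_K \quad\text{s.t.}\quad \sum_{K:\,K\cap S\neq\varnothing} x_K(|K\cap S|-1)\le |S|-1\ \ \forall\, \varnothing\neq S\subseteq R,\quad \sum_K x_K(|K|-1)=|R|-1,\quad x\ge 0. \]
   Context: For $K\subseteq R$ with $|K|\ge2$, a full component on $K$ is a tree in $G$ whose leaf set is exactly $K$ and whose internal vertices all lie in $V\setminus R$; $C_K$ is the minimum cost of a full component on $K$, and the LP variables $x_K$ range over such $K$ for which a full component exists. *)

theory Defs
  imports Complex_Main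
begin

definition edges_of :: "'a set \<Rightarrow> 'a set set" where
  "edges_of W = {{u, v} | u v. u \<in> W \<and> v \<in> W \<and> u \<noteq> v}"

definition adj :: "'a set set \<Rightarrow> ('a \<times> 'a) set" where
  "adj F = {(u, v). {u, v} \<in> F}"

definition deg :: "'a set set \<Rightarrow> 'a \<Rightarrow> nat" where
  "deg F v = card {e \<in> F. v \<in> e}"

definition is_tree :: "'a set \<Rightarrow> 'a set set \<Rightarrow> bool" where
  "is_tree W F \<longleftrightarrow> finite W \<and> F \<subseteq> edges_of W \<and> card F = card W - 1 \<and>
     (\<forall>u\<in>W. \<forall>v\<in>W. (u, v) \<in> (adj F)\<^sup>*)"

definition cost :: "('a set \<Rightarrow> real) \<Rightarrow> 'a set set \<Rightarrow> real" where
  "cost c F = (\<Sum>e\<in>F. c e)"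

definition full_component :: "'a set \<Rightarrow> 'a set \<Rightarrow> 'a set \<Rightarrow> 'a set \<Rightarrow> 'a set set \<Rightarrow> bool" where
  "full_component V R K W F \<longleftrightarrow> W \<subseteq> V \<and> is_tree W F \<and>
     {v \<in> W. deg F v = 1} = K \<and> W - K \<subseteq> V - R"

definition has_full_component :: "'a set \<Rightarrow> 'a set \<Rightarrow> 'a set \<Rightarrow> bool" where
  "has_full_component V R K \<longleftrightarrow> (\<exists>W F. full_component V R K W F)"

definition fc_cost :: "'a set \<Rightarrow> 'a set \<Rightarrow> ('a set \<Rightarrow> real) \<Rightarrow> 'a set \<Rightarrow> real" where
  "fc_cost V R c K = Min {cost c F | W F. full_component V R K W F}"

definition lp_index :: "'a set \<Rightarrow> 'a set \<Rightarrow> 'a set set" where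
  "lp_index V R = {K. K \<subseteq> R \<and> 2 \<le> card K \<and> has_full_component V R K}"

definition hyp_feasible :: "'a set \<Rightarrow> 'a set \<Rightarrow> ('a set \<Rightarrow> real) \<Rightarrow> bool" where
  "hyp_feasible V R x \<longleftrightarrow>
     (\<forall>K\<in>lp_index V R. 0 \<le> x K) \<and>
     (\<forall>S. S \<subseteq> R \<and> S \<noteq> {} \<longrightarrow>
        (\<Sum>K\<in>{K \<in> lp_index V R. K \<inter> S \<noteq> {}}. x K * (real (card (K \<inter> S)) - 1))
          \<le> real (card S) - 1) \<and>
     (\<Sum>K\<in>lp_index V R. x K * (real (card K) - 1)) = real (card R) - 1"

definition hyp_objective :: "'a set \<Rightarrow> 'a set \<Rightarrow> ('a set \<Rightarrow> real) \<Rightarrow> ('a set \<Rightarrow> real) \<Rightarrow> real" where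
  "hyp_objective V R c x = (\<Sum>K\<in>lp_index V R. fc_cost V R c K * x K)"

definition mst_cost :: "'a set \<Rightarrow> ('a set \<Rightarrow> real) \<Rightarrow> real" where
  "mst_cost R c = Min {cost c F | F. is_tree R F}"

end

theory Submission
  imports Defs
begin

text \<open>
  (1) Every LP index K carries a Hamiltonian path on K of cost at most 2 C_K: walk
      around a cheapest full component on K (doubling its tree, built up by inserting
      leaves into a tour) and shortcut past the Steiner vertices (triangle inequality).
  (2) Spreading each x_K over the edges of its path gives an edge weighting y of the
      complete graph on R.  A path on K has at most |K \<inter> S| - 1 edges inside S and
      exactly |K| - 1 edges in total, so the LP constraints make y a point of the
      subtour polytope: y(E(S)) \<le> |S| - 1 and y(E(R)) = |R| - 1.  Its cost is at most
      2 \<Sum> C_K x_K.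
  (3) For every point y of the subtour polytope, the MST cost is at most \<Sum> y_e c_e.
      This is a Kruskal-style argument: by induction over the vertex set and the cost
      threshold M, every S that is connected by edges of cost \<le> M has a spanning tree
      of cost \<le> \<Sum>_{E(S)} y_e c_e + (|S| - 1 - y(E(S))) M.
\<close>

section \<open>Edges, adjacency and trees\<close>

lemma edges_of_sub: "edges_of S \<subseteq> Pow S"
  by (auto simp: edges_of_def)

lemma finite_edges_of: "finite S \<Longrightarrow> finite (edges_of S)"
  by (rule finite_subset[OF edges_of_sub]) simp

lemma edges_of_mono: "A \<subseteq> B \<Longrightarrow> edges_of A \<subseteq> edges_of B"
  unfolding edges_of_def by blast

lemma in_edges_of: "{a, b} \<in> edges_of S \<longleftrightarrow> a \<in> S \<and> b \<in> S \<and> a \<noteq> b"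
  unfolding edges_of_def by (auto simp: doubleton_eq_iff)

lemma edges_ofE:
  "e \<in> edges_of S \<Longrightarrow> (\<And>a b. e = {a, b} \<Longrightarrow> a \<in> S \<Longrightarrow> b \<in> S \<Longrightarrow> a \<noteq> b \<Longrightarrow> P) \<Longrightarrow> P"
  unfolding edges_of_def by blast

lemma edges_of_singleton: "edges_of {a} = {}"
  unfolding edges_of_def by auto

lemma edges_of_disjoint: "A \<inter> B = {} \<Longrightarrow> edges_of A \<inter> edges_of B = {}"
  by (auto elim!: edges_ofE simp: doubleton_eq_iff)

lemma adj_mono: "F \<subseteq> G \<Longrightarrow> (adj F)\<^sup>* \<subseteq> (adj G)\<^sup>*"
  by (rule rtrancl_mono) (auto simp: adj_def)

lemma adj_reach_sym: "(u, v) \<in> (adj F)\<^sup>* \<Longrightarrow> (v, u) \<in> (adj F)\<^sup>*"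
proof -
  have "sym (adj F)" by (auto simp: sym_def adj_def insert_commute)
  then have "sym ((adj F)\<^sup>*)" by (rule sym_rtrancl)
  then show "(u, v) \<in> (adj F)\<^sup>* \<Longrightarrow> (v, u) \<in> (adj F)\<^sup>*" by (rule symD)
qed

lemma leaving_step:
  assumes "(u, v) \<in> r\<^sup>*" "u \<in> A" "v \<notin> A"
  shows "\<exists>a b. (a, b) \<in> r \<and> a \<in> A \<and> b \<notin> A"
  using assms by (induction rule: rtrancl_induct) auto

lemma tree_singleton: "is_tree {a} {}"
  by (auto simp: is_tree_def)

lemma tree_finite: "is_tree W F \<Longrightarrow> finite W \<and> finite F \<and> F \<subseteq> edges_of W"
  unfolding is_tree_def using finite_edges_of finite_subset by blast

lemma finite_tree_costs: "finite S \<Longrightarrow> finite {cost c F | F. is_tree S F}"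
  by (rule finite_subset[of _ "cost c ` Pow (edges_of S)"])
    (auto simp: is_tree_def finite_edges_of)

lemma tree_join:
  assumes TA: "is_tree A FA" and TB: "is_tree B FB" and AB: "A \<inter> B = {}"
    and a: "a \<in> A" and b: "b \<in> B"
  shows "is_tree (A \<union> B) (insert {a, b} (FA \<union> FB))"
    and "cost c (insert {a, b} (FA \<union> FB)) = c {a, b} + cost c FA + cost c FB"
proof -
  let ?F = "insert {a, b} (FA \<union> FB)"
  have fA: "finite A" and fFA: "finite FA" and sA: "FA \<subseteq> edges_of A"
    and fB: "finite B" and fFB: "finite FB" and sB: "FB \<subseteq> edges_of B"
    using tree_finite[OF TA] tree_finite[OF TB] by auto
  have cA: "card FA = card A - 1" and conA: "\<forall>u\<in>A. \<forall>v\<in>A. (u, v) \<in> (adj FA)\<^sup>*"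
    and cB: "card FB = card B - 1" and conB: "\<forall>u\<in>B. \<forall>v\<in>B. (u, v) \<in> (adj FB)\<^sup>*"
    using TA TB by (auto simp: is_tree_def)
  have dAB: "FA \<inter> FB = {}" using sA sB edges_of_disjoint[OF AB] by blast
  have new: "{a, b} \<notin> FA \<union> FB"
  proof
    assume "{a, b} \<in> FA \<union> FB"
    then have "{a, b} \<subseteq> A \<or> {a, b} \<subseteq> B" using sA sB edges_of_sub by blast
    with a b AB show False by blast
  qed
  have "card ?F = card FA + card FB + 1"
    using new dAB fFA fFB by (simp add: card_Un_disjoint)
  moreover have "card (A \<union> B) = card A + card B" using fA fB AB by (simp add: card_Un_disjoint)
  moreover have "card A \<ge> 1" "card B \<ge> 1" using a b fA fB by (auto simp: Suc_le_eq card_gt_0_iff)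
  ultimately have card: "card ?F = card (A \<union> B) - 1" using cA cB by simp
  have "{a, b} \<in> edges_of (A \<union> B)" using a b AB by (auto simp: in_edges_of)
  then have sub: "?F \<subseteq> edges_of (A \<union> B)"
    using sA sB edges_of_mono[of A "A \<union> B"] edges_of_mono[of B "A \<union> B"] by blast
  have reach: "(a, w) \<in> (adj ?F)\<^sup>*" if "w \<in> A \<union> B" for w
  proof (cases "w \<in> A")
    case True
    then show ?thesis using conA a adj_mono[of FA ?F] by blast
  next
    case False
    then have bw: "(b, w) \<in> (adj ?F)\<^sup>*" using that conB b adj_mono[of FB ?F] by blast
    have "(a, b) \<in> adj ?F" by (simp add: adj_def)
    from converse_rtrancl_into_rtrancl[OF this bw] show ?thesis .
  qed
  have "\<forall>u\<in>A \<union> B. \<forall>v\<in>A \<union> B. (u, v) \<in> (adj ?F)\<^sup>*"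
  proof (intro ballI)
    fix u v assume "u \<in> A \<union> B" "v \<in> A \<union> B"
    then have "(a, u) \<in> (adj ?F)\<^sup>*" "(a, v) \<in> (adj ?F)\<^sup>*" by (simp_all add: reach)
    from rtrancl_trans[OF adj_reach_sym[OF this(1)] this(2)] show "(u, v) \<in> (adj ?F)\<^sup>*" .
  qed
  then show "is_tree (A \<union> B) ?F" unfolding is_tree_def using fA fB sub card by simp
  have "cost c ?F = c {a, b} + cost c (FA \<union> FB)"
    unfolding cost_def using new fFA fFB by simp
  also have "cost c (FA \<union> FB) = cost c FA + cost c FB"
    unfolding cost_def by (rule sum.union_disjoint[OF fFA fFB dAB])
  finally show "cost c ?F = c {a, b} + cost c FA + cost c FB" by simp
qed

definition tree_partition :: "'a set \<Rightarrow> 'a set set \<Rightarrow> ('a set \<Rightarrow> 'a set set) \<Rightarrow> bool" where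
  "tree_partition S CC T \<longleftrightarrow> finite CC \<and> \<Union>CC = S \<and> (\<forall>C\<in>CC. C \<noteq> {}) \<and>
     (\<forall>A\<in>CC. \<forall>B\<in>CC. A \<noteq> B \<longrightarrow> A \<inter> B = {}) \<and> (\<forall>C\<in>CC. is_tree C (T C))"

lemma tree_partition_merge:
  assumes P: "tree_partition S CC T" and C1: "C1 \<in> CC" and C2: "C2 \<in> CC" and C12: "C1 \<noteq> C2"
    and a: "a \<in> C1" and b: "b \<in> C2"
  defines "CC' \<equiv> insert (C1 \<union> C2) (CC - {C1, C2})"
    and "T' \<equiv> T(C1 \<union> C2 := insert {a, b} (T C1 \<union> T C2))"
  shows "tree_partition S CC' T'" and "card CC' = card CC - 1"
    and "(\<Sum>C\<in>CC'. cost c (T' C)) = c {a, b} + (\<Sum>C\<in>CC. cost c (T C))"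
proof -
  define D where "D = CC - {C1, C2}"
  have fin: "finite CC" and US: "\<Union>CC = S" and ne: "\<forall>C\<in>CC. C \<noteq> {}"
    and dis: "\<forall>A\<in>CC. \<forall>B\<in>CC. A \<noteq> B \<longrightarrow> A \<inter> B = {}" and TT: "\<forall>C\<in>CC. is_tree C (T C)"
    using P by (auto simp: tree_partition_def)
  have CC: "CC = insert C1 (insert C2 D)" "C1 \<notin> insert C2 D" "C2 \<notin> D"
    using D_def C1 C2 C12 by auto
  have finD: "finite D" using fin D_def by simp
  have D_apart: "X \<inter> (C1 \<union> C2) = {}" if "X \<in> D" for X
    using that dis C1 C2 unfolding D_def by blast
  have nD: "C1 \<union> C2 \<notin> D" using D_apart a by blast
  have cc': "CC' = insert (C1 \<union> C2) D" unfolding CC'_def D_def ..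
  have join: "is_tree (C1 \<union> C2) (insert {a, b} (T C1 \<union> T C2))"
    "cost c (insert {a, b} (T C1 \<union> T C2)) = c {a, b} + cost c (T C1) + cost c (T C2)"
    using tree_join(1)[of C1 "T C1" C2 "T C2" a b] tree_join(2)[of C1 "T C1" C2 "T C2" a b c]
      TT C1 C2 dis C12 a b by auto
  have "\<forall>A\<in>CC'. \<forall>B\<in>CC'. A \<noteq> B \<longrightarrow> A \<inter> B = {}"
  proof (intro ballI impI)
    fix A B assume "A \<in> CC'" "B \<in> CC'" "A \<noteq> B"
    then consider "A = C1 \<union> C2" "B \<in> D" | "B = C1 \<union> C2" "A \<in> D" | "A \<in> D" "B \<in> D"
      unfolding cc' by blast
    then show "A \<inter> B = {}"
    proof cases
      case 3
      then show ?thesis using dis \<open>A \<noteq> B\<close> unfolding D_def by blast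
    qed (use D_apart in blast)+
  qed
  moreover have "\<forall>C\<in>CC'. is_tree C (T' C)"
    unfolding cc' T'_def using join TT CC nD by auto
  moreover have "\<Union>CC' = S" "\<forall>C\<in>CC'. C \<noteq> {}"
    unfolding cc' using US CC ne a by auto
  ultimately show "tree_partition S CC' T'"
    unfolding tree_partition_def cc' using finD by simp
  show "card CC' = card CC - 1" unfolding cc' using CC finD nD by simp
  have "(\<Sum>C\<in>D. cost c (T' C)) = (\<Sum>C\<in>D. cost c (T C))"
    by (rule sum.cong) (use nD T'_def in auto)
  then show "(\<Sum>C\<in>CC'. cost c (T' C)) = c {a, b} + (\<Sum>C\<in>CC. cost c (T C))"
    unfolding cc' using finD nD CC join(2) T'_def by simp
qed

lemma tree_partition_connect:
  assumes "tree_partition S CC T" "card CC = n" "n \<ge> 1"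
    and conn: "\<forall>u\<in>S. \<forall>v\<in>S. (u, v) \<in> r\<^sup>*" and rS: "r \<subseteq> S \<times> S"
    and rM: "\<forall>(a, b)\<in>r. c {a, b} \<le> M"
  shows "\<exists>F. is_tree S F \<and> cost c F \<le> (\<Sum>C\<in>CC. cost c (T C)) + (real n - 1) * M"
  using assms(1-3)
proof (induction n arbitrary: CC T)
  case 0
  then show ?case by simp
next
  case (Suc m)
  have fin: "finite CC" and US: "\<Union>CC = S" and ne: "\<forall>C\<in>CC. C \<noteq> {}"
    and dis: "\<forall>A\<in>CC. \<forall>B\<in>CC. A \<noteq> B \<longrightarrow> A \<inter> B = {}" and TT: "\<forall>C\<in>CC. is_tree C (T C)"
    using Suc.prems(1) by (auto simp: tree_partition_def)
  show ?case
  proof (cases "m = 0")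
    case True
    then obtain C where "CC = {C}" using Suc.prems(2) card_1_singletonE by auto
    then show ?thesis using US TT True by auto
  next
    case False
    then have "card CC \<ge> 2" using Suc.prems(2) by simp
    then obtain C1 C' where C1: "C1 \<in> CC" and C': "C' \<in> CC" "C' \<noteq> C1"
      using card_le_Suc0_iff_eq[OF fin] by (metis not_less_eq_eq numeral_2_eq_2)
    obtain u v where u: "u \<in> C1" and v: "v \<in> C'" using ne C1 C' by blast
    have "v \<notin> C1" using dis C1 C' v by blast
    moreover have "(u, v) \<in> r\<^sup>*" using conn US u v C1 C' by blast
    ultimately obtain a b where ab: "(a, b) \<in> r" "a \<in> C1" "b \<notin> C1"
      using leaving_step[of u v r C1] u by blast
    then obtain C2 where C2: "C2 \<in> CC" "b \<in> C2" using US rS by blast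
    have C12: "C1 \<noteq> C2" using C2 ab by blast
    note merged = tree_partition_merge[OF Suc.prems(1) C1 C2(1) C12 ab(2) C2(2)]
    obtain F where F: "is_tree S F" and
      "cost c F \<le> c {a, b} + (\<Sum>C\<in>CC. cost c (T C)) + (real m - 1) * M"
      using Suc.IH[OF merged(1)] merged(2) merged(3)[of c] Suc.prems(2) False by fastforce
    moreover have "c {a, b} \<le> M" using rM ab by auto
    ultimately show ?thesis by (auto simp: algebra_simps)
  qed
qed

section \<open>Spanning trees from points of the subtour polytope\<close>

definition cheap_edges :: "('a set \<Rightarrow> real) \<Rightarrow> 'a set \<Rightarrow> real \<Rightarrow> ('a \<times> 'a) set" where
  "cheap_edges c S M = {(a, b). a \<in> S \<and> b \<in> S \<and> a \<noteq> b \<and> c {a, b} \<le> M}"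

definition cheaply_connected :: "('a set \<Rightarrow> real) \<Rightarrow> 'a set \<Rightarrow> real \<Rightarrow> bool" where
  "cheaply_connected c S M \<longleftrightarrow> (\<forall>u\<in>S. \<forall>v\<in>S. (u, v) \<in> (cheap_edges c S M)\<^sup>*)"

definition weight_in :: "('a set \<Rightarrow> real) \<Rightarrow> 'a set \<Rightarrow> real" where
  "weight_in y S = (\<Sum>e\<in>edges_of S. y e)"

definition weighted_cost_in :: "('a set \<Rightarrow> real) \<Rightarrow> ('a set \<Rightarrow> real) \<Rightarrow> 'a set \<Rightarrow> real" where
  "weighted_cost_in c y S = (\<Sum>e\<in>edges_of S. y e * c e)"

text \<open>Strictly cheaper edges (cost below M) and the classes of vertices they connect;
  these classes are the Kruskal components just below threshold M.\<close>
definition below :: "('a set \<Rightarrow> real) \<Rightarrow> 'a set \<Rightarrow> real \<Rightarrow> ('a \<times> 'a) set" where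
  "below c S M = {(a, b). a \<in> S \<and> b \<in> S \<and> a \<noteq> b \<and> c {a, b} < M}"

definition below_class :: "('a set \<Rightarrow> real) \<Rightarrow> 'a set \<Rightarrow> real \<Rightarrow> 'a \<Rightarrow> 'a set" where
  "below_class c S M a = {b. (a, b) \<in> (below c S M)\<^sup>*}"

lemma below_reach_sym: "(a, b) \<in> (below c S M)\<^sup>* \<Longrightarrow> (b, a) \<in> (below c S M)\<^sup>*"
proof -
  have "sym (below c S M)" unfolding below_def by (auto simp: sym_def insert_commute)
  then have "sym ((below c S M)\<^sup>*)" by (rule sym_rtrancl)
  then show "(a, b) \<in> (below c S M)\<^sup>* \<Longrightarrow> (b, a) \<in> (below c S M)\<^sup>*" by (rule symD)
qed

lemma below_class_self: "a \<in> below_class c S M a"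
  by (simp add: below_class_def)

lemma below_class_sub: "a \<in> S \<Longrightarrow> below_class c S M a \<subseteq> S"
proof
  fix b assume "a \<in> S" "b \<in> below_class c S M a"
  then have "(a, b) \<in> (below c S M)\<^sup>*" "a \<in> S" by (simp_all add: below_class_def)
  then show "b \<in> S" by (induction rule: rtrancl_induct) (auto simp: below_def)
qed

lemma below_reach_class:
  assumes ab: "(a, b) \<in> (below c S M)\<^sup>*"
  shows "below_class c S M b = below_class c S M a"
  unfolding below_class_def
  using rtrancl_trans[OF ab] rtrancl_trans[OF below_reach_sym[OF ab]] by blast

lemma below_class_eq: "b \<in> below_class c S M a \<Longrightarrow> below_class c S M b = below_class c S M a"
  using below_reach_class by (simp add: below_class_def)

lemma below_class_disjoint:
  "below_class c S M a \<noteq> below_class c S M b \<Longrightarrow> below_class c S M a \<inter> below_class c S M b = {}"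
  by (metis below_class_eq disjoint_iff)

lemma below_class_connected:
  assumes "a \<in> S"
  shows "cheaply_connected c (below_class c S M a) M"
  unfolding cheaply_connected_def
proof (intro ballI)
  let ?C = "below_class c S M a" and ?r = "below c S M"
  fix u v assume u: "u \<in> ?C" and v: "v \<in> ?C"
  have "(u, v) \<in> ?r\<^sup>*"
    using u v below_class_eq[OF u] unfolding below_class_def by blast
  then have "(u, v) \<in> (?r \<inter> ?C \<times> ?C)\<^sup>* \<and> v \<in> ?C"
  proof (induction rule: rtrancl_induct)
    case (step w z)
    then have "z \<in> ?C" unfolding below_class_def by (blast intro: rtrancl_into_rtrancl)
    with step show ?case by (blast intro: rtrancl_into_rtrancl)
  qed (use u in simp)
  moreover have "?r \<inter> ?C \<times> ?C \<subseteq> cheap_edges c ?C M"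
    unfolding below_def cheap_edges_def by auto
  ultimately show "(u, v) \<in> (cheap_edges c ?C M)\<^sup>*" using rtrancl_mono by blast
qed

lemma below_cross_edge:
  assumes "e \<in> edges_of S" "\<forall>a\<in>S. e \<notin> edges_of (below_class c S M a)"
  shows "M \<le> c e"
proof (rule ccontr)
  assume "\<not> M \<le> c e"
  obtain a b where e: "e = {a, b}" "a \<in> S" "b \<in> S" "a \<noteq> b" using assms(1) by (rule edges_ofE)
  with \<open>\<not> M \<le> c e\<close> have "b \<in> below_class c S M a"
    unfolding below_class_def below_def by auto
  then have "e \<in> edges_of (below_class c S M a)"
    using e below_class_self by (simp add: in_edges_of)
  then show False using assms(2) e by blast
qed

lemma lower_threshold:
  assumes fS: "finite S" and a: "a \<in> S" and single: "below_class c S M a = S"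
  shows "S = {a} \<or> (\<exists>M' < M. cheaply_connected c S M' \<and>
           {e \<in> edges_of S. c e < M'} \<subset> {e \<in> edges_of S. c e < M})"
proof (cases "\<exists>e\<in>edges_of S. c e < M")
  case False
  then have "below c S M = {}" unfolding below_def by (auto simp: in_edges_of)
  then show ?thesis using single by (auto simp: below_class_def)
next
  case True
  define M' where "M' = Max {c e | e. e \<in> edges_of S \<and> c e < M}"
  have fin: "finite {c e | e. e \<in> edges_of S \<and> c e < M}" using finite_edges_of[OF fS] by simp
  have "M' \<in> {c e | e. e \<in> edges_of S \<and> c e < M}"
    unfolding M'_def using fin True by (intro Max_in) auto
  then obtain e0 where e0: "e0 \<in> edges_of S" "c e0 = M'" "M' < M" by auto
  have le: "c e \<le> M'" if "e \<in> edges_of S" "c e < M" for e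
    unfolding M'_def using fin that by (auto intro: Max_ge)
  have "below c S M \<subseteq> cheap_edges c S M'"
    unfolding below_def cheap_edges_def using le by (auto simp: in_edges_of)
  moreover have "(u, v) \<in> (below c S M)\<^sup>*" if "u \<in> S" "v \<in> S" for u v
    using that single below_class_eq[of u c S M a] unfolding below_class_def by blast
  ultimately have "cheaply_connected c S M'"
    unfolding cheaply_connected_def using rtrancl_mono by blast
  moreover have "{e \<in> edges_of S. c e < M'} \<subset> {e \<in> edges_of S. c e < M}" using e0 by auto
  ultimately show ?thesis using e0 by blast
qed

text \<open>Accounting for one Kruskal phase: partition S into blocks, bound each block, and
  pay M for each of the card CC - 1 links; edges between blocks cost at least M, so the
  weight they carry pays for the links.\<close>
lemma partition_accounting:
  fixes CC :: "'a set set" and t :: "'a set \<Rightarrow> real"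
  assumes fS: "finite S" and US: "\<Union>CC = S"
    and dis: "\<forall>A\<in>CC. \<forall>B\<in>CC. A \<noteq> B \<longrightarrow> A \<inter> B = {}"
    and ynn: "\<forall>e\<in>edges_of S. 0 \<le> y e"
    and cross: "\<forall>e\<in>edges_of S - (\<Union>C\<in>CC. edges_of C). M \<le> c e"
    and parts: "\<forall>C\<in>CC. t C \<le> weighted_cost_in c y C + (real (card C) - 1 - weight_in y C) * M"
    and whole: "f \<le> (\<Sum>C\<in>CC. t C) + (real (card CC) - 1) * M"
  shows "f \<le> weighted_cost_in c y S + (real (card S) - 1 - weight_in y S) * M"
proof -
  define X where "X = (\<Union>C\<in>CC. edges_of C)"
  have finCC: "finite CC" using finite_UnionD[of CC] fS US by simp
  have fC: "\<forall>C\<in>CC. finite C" by (metis US Union_upper fS finite_subset)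
  have "card S = (\<Sum>C\<in>CC. card C)"
    using card_Union_disjoint[of CC] US dis fC unfolding pairwise_def disjnt_def by metis
  then have cardS: "(\<Sum>C\<in>CC. real (card C)) = real (card S)" by simp
  have XS: "X \<subseteq> edges_of S" unfolding X_def US[symmetric] by (intro UN_least edges_of_mono Union_upper)
  have finES: "finite (edges_of S)" using finite_edges_of[OF fS] .
  have disE: "\<forall>A\<in>CC. \<forall>B\<in>CC. A \<noteq> B \<longrightarrow> edges_of A \<inter> edges_of B = {}"
    using dis by (simp add: edges_of_disjoint)
  have finEC: "\<forall>C\<in>CC. finite (edges_of C)" by (simp add: fC finite_edges_of)
  have sumX: "(\<Sum>e\<in>X. g e) = (\<Sum>C\<in>CC. \<Sum>e\<in>edges_of C. g e)" for g :: "'a set \<Rightarrow> real"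
    unfolding X_def by (rule sum.UNION_disjoint[OF finCC finEC disE])
  have splitY: "weight_in y S = (\<Sum>C\<in>CC. weight_in y C) + (\<Sum>e\<in>edges_of S - X. y e)"
    unfolding weight_in_def using sumX[of y] sum.subset_diff[OF XS finES, of y] by simp
  have splitZ: "weighted_cost_in c y S =
      (\<Sum>C\<in>CC. weighted_cost_in c y C) + (\<Sum>e\<in>edges_of S - X. y e * c e)"
    unfolding weighted_cost_in_def
    using sumX[of "\<lambda>e. y e * c e"] sum.subset_diff[OF XS finES, of "\<lambda>e. y e * c e"] by simp
  have crossZ: "(\<Sum>e\<in>edges_of S - X. y e) * M \<le> (\<Sum>e\<in>edges_of S - X. y e * c e)"
    unfolding sum_distrib_right
  proof (rule sum_mono)
    fix e assume "e \<in> edges_of S - X"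
    then have "M \<le> c e" "0 \<le> y e" using cross ynn unfolding X_def by auto
    then show "y e * M \<le> y e * c e" by (rule mult_left_mono)
  qed
  have "(\<Sum>C\<in>CC. t C) \<le>
      (\<Sum>C\<in>CC. weighted_cost_in c y C + (real (card C) - 1 - weight_in y C) * M)"
    using parts by (intro sum_mono) auto
  also have "\<dots> = (\<Sum>C\<in>CC. weighted_cost_in c y C) +
      ((\<Sum>C\<in>CC. real (card C)) - real (card CC) - (\<Sum>C\<in>CC. weight_in y C)) * M"
    by (simp add: sum.distrib sum_subtractf algebra_simps sum_distrib_left sum_distrib_right)
  finally have "(\<Sum>C\<in>CC. t C) \<le> (\<Sum>C\<in>CC. weighted_cost_in c y C) +
      (real (card S) - real (card CC) - (\<Sum>C\<in>CC. weight_in y C)) * M"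
    unfolding cardS .
  then show ?thesis using whole splitY splitZ crossZ by (simp add: algebra_simps)
qed

lemma below_classes_partition:
  "\<Union>(below_class c S M ` S) = S"
  "\<forall>C\<in>below_class c S M ` S. C \<noteq> {}"
  "\<forall>A\<in>below_class c S M ` S. \<forall>B\<in>below_class c S M ` S. A \<noteq> B \<longrightarrow> A \<inter> B = {}"
proof -
  show "\<Union>(below_class c S M ` S) = S"
  proof
    show "\<Union>(below_class c S M ` S) \<subseteq> S" by (rule UN_least) (rule below_class_sub)
    show "S \<subseteq> \<Union>(below_class c S M ` S)"
    proof
      fix x assume "x \<in> S"
      then show "x \<in> \<Union>(below_class c S M ` S)" using below_class_self[of x c S M] by blast
    qed
  qed
  show "\<forall>C\<in>below_class c S M ` S. C \<noteq> {}" by (metis below_class_self empty_iff imageE)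
  show "\<forall>A\<in>below_class c S M ` S. \<forall>B\<in>below_class c S M ` S. A \<noteq> B \<longrightarrow> A \<inter> B = {}"
  proof (intro ballI impI)
    fix A B assume "A \<in> below_class c S M ` S" "B \<in> below_class c S M ` S" "A \<noteq> B"
    then obtain a b where "A = below_class c S M a" "B = below_class c S M b" by blast
    with \<open>A \<noteq> B\<close> show "A \<inter> B = {}" using below_class_disjoint by simp
  qed
qed

text \<open>A Kruskal phase that splits S: if the classes below M are proper subsets of S and
  each class satisfies the bound, then so does S (link the class trees by cheap edges).\<close>
lemma kruskal_split_phase:
  assumes fS: "finite S" and Sne: "S \<noteq> {}" and ynn: "\<forall>e\<in>edges_of S. 0 \<le> y e"
    and conn: "cheaply_connected c S M" and split: "\<forall>a\<in>S. below_class c S M a \<noteq> S"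
    and parts: "\<And>C. C \<subset> S \<Longrightarrow> C \<noteq> {} \<Longrightarrow> cheaply_connected c C M \<Longrightarrow> \<exists>T. is_tree C T \<and>
       cost c T \<le> weighted_cost_in c y C + (real (card C) - 1 - weight_in y C) * M"
  shows "\<exists>T. is_tree S T \<and>
    cost c T \<le> weighted_cost_in c y S + (real (card S) - 1 - weight_in y S) * M"
proof -
  define CC where "CC = below_class c S M ` S"
  note US = below_classes_partition(1)[of c S M, folded CC_def]
    and CCne = below_classes_partition(2)[of c S M, folded CC_def]
    and dis = below_classes_partition(3)[of c S M, folded CC_def]
  have "\<forall>C\<in>CC. \<exists>T. is_tree C T \<and>
      cost c T \<le> weighted_cost_in c y C + (real (card C) - 1 - weight_in y C) * M"
  proof
    fix C assume C: "C \<in> CC"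
    then obtain a where a: "a \<in> S" "C = below_class c S M a" unfolding CC_def by blast
    have "C \<subset> S" using split below_class_sub[OF a(1)] a by auto
    moreover have "cheaply_connected c C M" using below_class_connected[OF a(1)] a(2) by simp
    ultimately show "\<exists>T. is_tree C T \<and>
        cost c T \<le> weighted_cost_in c y C + (real (card C) - 1 - weight_in y C) * M"
      using parts CCne C by blast
  qed
  then obtain T where T: "\<forall>C\<in>CC. is_tree C (T C) \<and>
      cost c (T C) \<le> weighted_cost_in c y C + (real (card C) - 1 - weight_in y C) * M"
    by metis
  have part: "tree_partition S CC T"
    unfolding tree_partition_def using fS US CCne dis T by (simp add: CC_def)
  have "card CC \<ge> 1" using Sne fS unfolding CC_def by (simp add: Suc_le_eq card_gt_0_iff)
  then obtain F where F: "is_tree S F"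
    "cost c F \<le> (\<Sum>C\<in>CC. cost c (T C)) + (real (card CC) - 1) * M"
    using tree_partition_connect[OF part refl _ _ _ _, of "cheap_edges c S M" c M] conn
    unfolding cheaply_connected_def by (auto simp: cheap_edges_def)
  have "\<forall>e\<in>edges_of S - (\<Union>C\<in>CC. edges_of C). M \<le> c e"
    unfolding CC_def using below_cross_edge[of _ S c M] by auto
  then have "cost c F \<le> weighted_cost_in c y S + (real (card S) - 1 - weight_in y S) * M"
    using partition_accounting[OF fS US dis ynn _ _ F(2)] T by simp
  with F(1) show ?thesis by blast
qed

lemma subtour_tree_step:
  assumes SR: "S \<subseteq> R" and Sne: "S \<noteq> {}" and fR: "finite R"
    and ynn: "\<forall>e\<in>edges_of R. 0 \<le> y e"
    and subtour: "\<forall>S. S \<subseteq> R \<and> S \<noteq> {} \<longrightarrow> weight_in y S \<le> real (card S) - 1"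
    and smaller: "\<And>S' M'. card S' < card S \<Longrightarrow> S' \<subseteq> R \<Longrightarrow> S' \<noteq> {} \<Longrightarrow>
       cheaply_connected c S' M' \<Longrightarrow> \<exists>T. is_tree S' T \<and>
         cost c T \<le> weighted_cost_in c y S' + (real (card S') - 1 - weight_in y S') * M'"
  shows "card {e \<in> edges_of S. c e < M} = n \<Longrightarrow> cheaply_connected c S M \<Longrightarrow>
    \<exists>T. is_tree S T \<and> cost c T \<le> weighted_cost_in c y S + (real (card S) - 1 - weight_in y S) * M"
proof (induction n arbitrary: M rule: less_induct)
  case (less n M)
  have fS: "finite S" using finite_subset[OF SR fR] .
  have "weight_in y S \<le> real (card S) - 1" using subtour SR Sne by blast
  then have slack: "0 \<le> real (card S) - 1 - weight_in y S" by simp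
  show ?case
  proof (cases "\<exists>a\<in>S. below_class c S M a = S")
    case True
    then obtain a where a: "a \<in> S" "below_class c S M a = S" by blast
    from lower_threshold[OF fS a] show ?thesis
    proof (elim disjE exE conjE)
      assume "S = {a}"
      then have "cost c {} \<le> weighted_cost_in c y S + (real (card S) - 1 - weight_in y S) * M"
        by (simp add: cost_def weighted_cost_in_def weight_in_def edges_of_singleton)
      moreover have "is_tree S {}" using tree_singleton \<open>S = {a}\<close> by simp
      ultimately show ?thesis by blast
    next
      fix M' assume M': "M' < M" "cheaply_connected c S M'"
        and fewer: "{e \<in> edges_of S. c e < M'} \<subset> {e \<in> edges_of S. c e < M}"
      have "finite {e \<in> edges_of S. c e < M}"
        by (rule finite_subset[of _ "edges_of S"]) (auto simp: finite_edges_of fS)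
      then have "card {e \<in> edges_of S. c e < M'} < n"
        using psubset_card_mono[OF _ fewer] less.prems(1) by simp
      then obtain T where T: "is_tree S T"
        "cost c T \<le> weighted_cost_in c y S + (real (card S) - 1 - weight_in y S) * M'"
        using less.IH[OF _ refl M'(2)] by blast
      moreover have "(real (card S) - 1 - weight_in y S) * M' \<le> (real (card S) - 1 - weight_in y S) * M"
        using slack M'(1) by (intro mult_left_mono) auto
      ultimately have "cost c T \<le> weighted_cost_in c y S + (real (card S) - 1 - weight_in y S) * M"
        by linarith
      with T(1) show ?thesis by blast
    qed
  next
    case False
    then have split: "\<forall>a\<in>S. below_class c S M a \<noteq> S" by blast
    have "\<forall>e\<in>edges_of S. 0 \<le> y e" using ynn edges_of_mono[OF SR] by blast
    then show ?thesis
    proof (rule kruskal_split_phase[OF fS Sne _ less.prems(2) split])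
      fix C assume C: "C \<subset> S" "C \<noteq> {}" "cheaply_connected c C M"
      moreover have "card C < card S" "C \<subseteq> R" using C(1) psubset_card_mono[OF fS] SR by auto
      ultimately show "\<exists>T. is_tree C T \<and>
          cost c T \<le> weighted_cost_in c y C + (real (card C) - 1 - weight_in y C) * M"
        using smaller by blast
    qed
  qed
qed

lemma subtour_tree:
  assumes fR: "finite R" and ynn: "\<forall>e\<in>edges_of R. 0 \<le> y e"
    and subtour: "\<forall>S. S \<subseteq> R \<and> S \<noteq> {} \<longrightarrow> weight_in y S \<le> real (card S) - 1"
  shows "S \<subseteq> R \<Longrightarrow> S \<noteq> {} \<Longrightarrow> cheaply_connected c S M \<Longrightarrow> \<exists>T. is_tree S T \<and>
    cost c T \<le> weighted_cost_in c y S + (real (card S) - 1 - weight_in y S) * M"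
proof (induction "card S" arbitrary: S M rule: less_induct)
  case less
  show ?case
    by (rule subtour_tree_step[OF less.prems(1,2) fR ynn subtour less.hyps refl less.prems(3)])
qed

lemma mst_le_subtour_point:
  assumes fR: "finite R" and ynn: "\<forall>e\<in>edges_of R. 0 \<le> y e"
    and subtour: "\<forall>S. S \<subseteq> R \<and> S \<noteq> {} \<longrightarrow> weight_in y S \<le> real (card S) - 1"
    and total: "weight_in y R = real (card R) - 1"
  shows "mst_cost R c \<le> weighted_cost_in c y R"
proof -
  have Rne: "R \<noteq> {}" using total by (auto simp: weight_in_def edges_of_def)
  define M where "M = Max (insert 0 (c ` edges_of R))"
  have "c e \<le> M" if "e \<in> edges_of R" for e
    unfolding M_def using finite_edges_of[OF fR] that by (intro Max_ge) auto
  then have "(u, v) \<in> cheap_edges c R M" if "u \<in> R" "v \<in> R" "u \<noteq> v" for u v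
    unfolding cheap_edges_def using that by (simp add: in_edges_of)
  then have "cheaply_connected c R M"
    unfolding cheaply_connected_def by (metis r_into_rtrancl rtrancl.rtrancl_refl)
  then obtain T where T: "is_tree R T" "cost c T \<le> weighted_cost_in c y R"
    using subtour_tree[OF fR ynn subtour, of R c M] Rne total by auto
  have "mst_cost R c \<le> cost c T"
    unfolding mst_cost_def using T(1) finite_tree_costs[OF fR] by (intro Min_le) auto
  with T(2) show ?thesis by simp
qed

section \<open>Paths given as vertex lists\<close>

fun path_cost :: "('a set \<Rightarrow> real) \<Rightarrow> 'a list \<Rightarrow> real" where
  "path_cost c (a # b # L) = c {a, b} + path_cost c (b # L)"
| "path_cost c _ = 0"

fun path_edges :: "'a list \<Rightarrow> 'a set set" where
  "path_edges (a # b # L) = insert {a, b} (path_edges (b # L))"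
| "path_edges _ = {}"

lemma path_edges_sub: "path_edges L \<subseteq> Pow (set L)"
  by (induction L rule: path_edges.induct) auto

lemma finite_path_edges: "finite (path_edges L)"
  by (induction L rule: path_edges.induct) auto

lemma path_edges_in: "distinct L \<Longrightarrow> set L \<subseteq> W \<Longrightarrow> path_edges L \<subseteq> edges_of W"
  by (induction L rule: path_edges.induct) (auto simp: in_edges_of)

lemma first_edge_new: "distinct (a # b # L) \<Longrightarrow> {a, b} \<notin> path_edges (b # L)"
  using path_edges_sub[of "b # L"] by auto

lemma cost_path_edges: "distinct L \<Longrightarrow> cost c (path_edges L) = path_cost c L"
proof (induction L rule: path_edges.induct)
  case (1 a b L)
  then show ?case
    using first_edge_new[OF "1.prems"] finite_path_edges[of "b # L"] by (simp add: cost_def)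
qed (auto simp: cost_def)

lemma card_path_edges: "distinct L \<Longrightarrow> card (path_edges L) = length L - 1"
proof (induction L rule: path_edges.induct)
  case (1 a b L)
  then show ?case using first_edge_new[OF "1.prems"] finite_path_edges[of "b # L"] by simp
qed auto

text \<open>A path has at most |set L \<inter> S| - 1 edges inside S: those edges form a union of
  vertex-disjoint subpaths on the vertices set L \<inter> S.\<close>
lemma path_edges_inside:
  "distinct L \<Longrightarrow> card {e \<in> path_edges L. e \<subseteq> S} \<le> card (set L \<inter> S) - 1"
proof (induction L rule: path_edges.induct)
  case (1 a b L)
  let ?A = "{e \<in> path_edges (b # L). e \<subseteq> S}"
  have IH: "card ?A \<le> card (set (b # L) \<inter> S) - 1" using 1 by simp
  have a_new: "a \<notin> set (b # L)" using "1.prems" by simp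
  have fA: "finite ?A" using finite_path_edges[of "b # L"] by simp
  show ?case
  proof (cases "{a, b} \<subseteq> S")
    case True
    have eq: "{e \<in> path_edges (a # b # L). e \<subseteq> S} = insert {a, b} ?A" using True by auto
    have "card (set (a # b # L) \<inter> S) = Suc (card (set (b # L) \<inter> S))"
      using True a_new by (simp add: insert_absorb Int_insert_left)
    moreover have "card (set (b # L) \<inter> S) \<ge> 1"
      using True by (simp add: Suc_le_eq card_gt_0_iff)
    moreover have "card (insert {a, b} ?A) \<le> Suc (card ?A)" using fA by (simp add: card_insert_if)
    ultimately show ?thesis unfolding eq using IH by linarith
  next
    case False
    have eq: "{e \<in> path_edges (a # b # L). e \<subseteq> S} = ?A" using False by auto
    have "card (set (b # L) \<inter> S) \<le> card (set (a # b # L) \<inter> S)"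
      by (rule card_mono) auto
    then show ?thesis unfolding eq using IH by linarith
  qed
qed auto

lemma path_cost_Cons: "ys \<noteq> [] \<Longrightarrow> path_cost c (x # ys) = c {x, hd ys} + path_cost c ys"
  by (cases ys) auto

lemma hd_last_distinct: "distinct L \<Longrightarrow> 2 \<le> length L \<Longrightarrow> hd L \<noteq> last L"
  by (cases L) auto

lemma shortcut:
  fixes c :: "'a set \<Rightarrow> real"
  assumes tri: "\<And>u v w. u \<in> V \<Longrightarrow> v \<in> V \<Longrightarrow> w \<in> V \<Longrightarrow> u \<noteq> v \<Longrightarrow> v \<noteq> w \<Longrightarrow> u \<noteq> w \<Longrightarrow>
           c {u, w} \<le> c {u, v} + c {v, w}"
    and nn: "\<And>e. e \<in> edges_of V \<Longrightarrow> 0 \<le> c e"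
  shows "distinct (a # L) \<Longrightarrow> set (a # L) \<subseteq> V \<Longrightarrow>
    path_cost c (a # filter P L) \<le> path_cost c (a # L)"
proof (induction L arbitrary: a)
  case Nil
  then show ?case by simp
next
  case (Cons b L)
  show ?case
  proof (cases "P b")
    case True
    then show ?thesis using Cons by simp
  next
    case False
    have "path_cost c (a # L) \<le> c {a, b} + path_cost c (b # L)"
    proof (cases L)
      case Nil
      have "{a, b} \<in> edges_of V" using Cons.prems by (simp add: in_edges_of)
      then show ?thesis using Nil nn by simp
    next
      case (Cons d L')
      have "c {a, d} \<le> c {a, b} + c {b, d}"
        using Cons \<open>distinct (a # b # L)\<close> \<open>set (a # b # L) \<subseteq> V\<close> by (intro tri) auto
      then show ?thesis using Cons by simp
    qed
    moreover have "path_cost c (a # filter P L) \<le> path_cost c (a # L)" using Cons by simp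
    ultimately show ?thesis using False by simp
  qed
qed

section \<open>Doubling a tree into a tour\<close>

lemma handshake:
  assumes fW: "finite W" and FW: "F \<subseteq> edges_of W"
  shows "(\<Sum>v\<in>W. deg F v) = 2 * card F"
proof -
  have fF: "finite F" using FW finite_edges_of[OF fW] finite_subset by blast
  have "deg F v = (\<Sum>e\<in>F. if v \<in> e then 1 else 0)" for v
  proof -
    have "deg F v = (\<Sum>e\<in>{e\<in>F. v \<in> e}. 1)" unfolding deg_def by (rule card_eq_sum)
    also have "\<dots> = (\<Sum>e\<in>F. if v \<in> e then 1 else 0)" by (rule sum.inter_filter[OF fF])
    finally show ?thesis .
  qed
  then have "(\<Sum>v\<in>W. deg F v) = (\<Sum>v\<in>W. \<Sum>e\<in>F. if v \<in> e then 1 else 0)" by simp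
  also have "\<dots> = (\<Sum>e\<in>F. \<Sum>v\<in>W. if v \<in> e then 1 else 0)" by (rule sum.swap)
  also have "\<dots> = (\<Sum>e\<in>F. 2)"
  proof (rule sum.cong)
    fix e assume "e \<in> F"
    then have "e \<in> edges_of W" using FW by blast
    then obtain a b where ab: "e = {a, b}" "a \<in> W" "b \<in> W" "a \<noteq> b" by (rule edges_ofE)
    have "(\<Sum>v\<in>W. if v \<in> e then 1 else 0) = (\<Sum>v\<in>{v\<in>W. v \<in> e}. 1::nat)"
      by (rule sum.inter_filter[OF fW, symmetric])
    also have "{v\<in>W. v \<in> e} = {a, b}" using ab by auto
    finally show "(\<Sum>v\<in>W. if v \<in> e then 1 else 0) = (2::nat)" using ab by simp
  qed simp
  finally show ?thesis by simp
qed

lemma tree_deg_pos: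
  assumes T: "is_tree W F" and W2: "2 \<le> card W" and v: "v \<in> W"
  shows "1 \<le> deg F v"
proof -
  have fF: "finite F" using tree_finite[OF T] by simp
  have "W - {v} \<noteq> {}"
  proof
    assume "W - {v} = {}"
    then have "W = {v}" using v by blast
    then show False using W2 by simp
  qed
  then obtain w where w: "w \<in> W" "w \<noteq> v" by blast
  have "(v, w) \<in> (adj F)\<^sup>*" using T v w unfolding is_tree_def by blast
  then obtain z where "(v, z) \<in> adj F" using w(2) by (cases rule: converse_rtranclE) auto
  then have "{v, z} \<in> {e \<in> F. v \<in> e}" by (simp add: adj_def)
  then have "{e \<in> F. v \<in> e} \<noteq> {}" by blast
  then show ?thesis unfolding deg_def using fF by (simp add: Suc_le_eq card_gt_0_iff)
qed

lemma tree_leaf: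
  assumes T: "is_tree W F" and W2: "2 \<le> card W" and r: "r \<in> W"
  shows "\<exists>v\<in>W. v \<noteq> r \<and> deg F v = 1"
proof (rule ccontr)
  assume no: "\<not> (\<exists>v\<in>W. v \<noteq> r \<and> deg F v = 1)"
  have fW: "finite W" and FW: "F \<subseteq> edges_of W" and cF: "card F = card W - 1"
    using T unfolding is_tree_def by auto
  have "(\<Sum>v\<in>W - {r}. 2) \<le> (\<Sum>v\<in>W - {r}. deg F v)"
    using tree_deg_pos[OF T W2] no by (intro sum_mono) fastforce
  moreover have "(\<Sum>v\<in>W. deg F v) = deg F r + (\<Sum>v\<in>W - {r}. deg F v)"
    using fW r by (simp add: sum.remove)
  moreover have "deg F r \<ge> 1" using tree_deg_pos[OF T W2 r] .
  moreover have "card (W - {r}) = card W - 1" using fW r by simp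
  ultimately have "(\<Sum>v\<in>W. deg F v) \<ge> 1 + 2 * (card W - 1)" by simp
  then show False using handshake[OF fW FW] cF W2 by simp
qed

lemma leaf_edge:
  assumes T: "is_tree W F" and d: "deg F v = 1"
  obtains u where "{u, v} \<in> F" "u \<noteq> v" "u \<in> W" "\<forall>e\<in>F. v \<in> e \<longrightarrow> e = {u, v}"
proof -
  have FW: "F \<subseteq> edges_of W" using T unfolding is_tree_def by auto
  obtain e where e: "{e' \<in> F. v \<in> e'} = {e}" using d unfolding deg_def by (rule card_1_singletonE)
  then have eF: "e \<in> F" "v \<in> e" by auto
  then obtain a b where ab: "e = {a, b}" "a \<in> W" "b \<in> W" "a \<noteq> b"
    using FW by (blast elim: edges_ofE)
  define u where "u = (if a = v then b else a)"
  have "e = {u, v}" "u \<noteq> v" "u \<in> W" using ab eF u_def by auto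
  moreover have "\<forall>e'\<in>F. v \<in> e' \<longrightarrow> e' = {u, v}" using e \<open>e = {u, v}\<close> by blast
  ultimately show ?thesis using that eF by blast
qed

lemma tree_remove_leaf:
  assumes T: "is_tree W F" and W2: "2 \<le> card W" and v: "v \<in> W"
    and uv: "{u, v} \<in> F" "u \<noteq> v" and uniq: "\<forall>e\<in>F. v \<in> e \<longrightarrow> e = {u, v}"
  shows "is_tree (W - {v}) (F - {{u, v}})"
proof -
  let ?F = "F - {{u, v}}"
  have fW: "finite W" and fF: "finite F" and FW: "F \<subseteq> edges_of W" using tree_finite[OF T] by auto
  have cF: "card F = card W - 1" and con: "\<forall>x\<in>W. \<forall>y\<in>W. (x, y) \<in> (adj F)\<^sup>*"
    using T unfolding is_tree_def by auto
  have sub: "?F \<subseteq> edges_of (W - {v})"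
  proof
    fix e assume e: "e \<in> ?F"
    then obtain a b where "e = {a, b}" "a \<in> W" "b \<in> W" "a \<noteq> b"
      using FW by (blast elim: edges_ofE)
    moreover have "v \<notin> e" using e uniq by blast
    ultimately show "e \<in> edges_of (W - {v})" by (auto simp: in_edges_of)
  qed
  have card: "card ?F = card (W - {v}) - 1" using cF fF uv fW v W2 by simp
  have avoid: "(x, z) \<in> (adj F)\<^sup>* \<Longrightarrow> x \<in> W - {v} \<Longrightarrow>
      (z \<noteq> v \<longrightarrow> (x, z) \<in> (adj ?F)\<^sup>*) \<and> (z = v \<longrightarrow> (x, u) \<in> (adj ?F)\<^sup>*)" for x z
  proof (induction rule: rtrancl_induct)
    case base
    then show ?case by simp
  next
    case (step y z)
    have yz: "{y, z} \<in> F" using step(2) by (simp add: adj_def)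
    consider "y = v" | "y \<noteq> v" "z = v" | "y \<noteq> v" "z \<noteq> v" by blast
    then show ?case
    proof cases
      case 1
      then have "z = u" using yz uniq uv(2) by (auto simp: doubleton_eq_iff)
      then show ?thesis using step 1 uv(2) by auto
    next
      case 2
      then have "y = u" using yz uniq uv(2) by (auto simp: doubleton_eq_iff)
      then show ?thesis using step 2 by auto
    next
      case 3
      then have "(y, z) \<in> adj ?F" using yz by (auto simp: adj_def doubleton_eq_iff)
      then show ?thesis using step 3 by (meson rtrancl.rtrancl_into_rtrancl)
    qed
  qed
  have "\<forall>x\<in>W - {v}. \<forall>y\<in>W - {v}. (x, y) \<in> (adj ?F)\<^sup>*"
    using con avoid by blast
  then show ?thesis unfolding is_tree_def using fW sub card by simp
qed

fun insert_after :: "'a \<Rightarrow> 'a \<Rightarrow> 'a list \<Rightarrow> 'a list" where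
  "insert_after u v [] = []"
| "insert_after u v (x # xs) = (if x = u then x # v # xs else x # insert_after u v xs)"

lemma set_insert_after: "u \<in> set L \<Longrightarrow> set (insert_after u v L) = insert v (set L)"
  by (induction L) auto

lemma distinct_insert_after:
  "distinct L \<Longrightarrow> v \<notin> set L \<Longrightarrow> u \<in> set L \<Longrightarrow> distinct (insert_after u v L)"
  by (induction L) (auto simp: set_insert_after)

lemma hd_insert_after: "L \<noteq> [] \<Longrightarrow> hd (insert_after u v L) = hd L"
  by (cases L) auto

lemma insert_after_Nil_iff: "insert_after u v L = [] \<longleftrightarrow> L = []"
  by (cases L) auto

lemma length_insert_after: "u \<in> set L \<Longrightarrow> length (insert_after u v L) = Suc (length L)"
  by (induction L) auto

definition close_cost :: "('a set \<Rightarrow> real) \<Rightarrow> 'a list \<Rightarrow> real" where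
  "close_cost c L = (if 2 \<le> length L then c {last L, hd L} else 0)"

context
  fixes V :: "'a set" and c :: "'a set \<Rightarrow> real"
  assumes tri: "\<And>u v w. u \<in> V \<Longrightarrow> v \<in> V \<Longrightarrow> w \<in> V \<Longrightarrow> u \<noteq> v \<Longrightarrow> v \<noteq> w \<Longrightarrow> u \<noteq> w \<Longrightarrow>
           c {u, w} \<le> c {u, v} + c {v, w}"
begin

text \<open>Inserting v after u costs c{u,v} if u is last, and at most 2 c{u,v} otherwise
  (the edge from u to its old successor w is replaced by u-v-w).\<close>
lemma path_cost_insert_after:
  "distinct L \<Longrightarrow> set L \<subseteq> V \<Longrightarrow> u \<in> set L \<Longrightarrow> v \<in> V \<Longrightarrow> v \<notin> set L \<Longrightarrow>
    (u = last L \<and> path_cost c (insert_after u v L) = path_cost c L + c {u, v} \<and>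
       last (insert_after u v L) = v) \<or>
    (u \<noteq> last L \<and> path_cost c (insert_after u v L) \<le> path_cost c L + 2 * c {u, v} \<and>
       last (insert_after u v L) = last L)"
proof (induction L)
  case Nil
  then show ?case by simp
next
  case (Cons x xs)
  show ?case
  proof (cases "x = u")
    case True
    show ?thesis
    proof (cases xs)
      case Nil
      then show ?thesis using True by simp
    next
      case (Cons b xs')
      have "c {v, b} \<le> c {v, u} + c {u, b}"
        using Cons.prems \<open>xs = b # xs'\<close> True by (intro tri) auto
      moreover have "c {v, u} = c {u, v}" by (simp add: insert_commute)
      moreover have "u \<noteq> last (x # xs)" using Cons.prems True \<open>xs = b # xs'\<close>
        by (metis distinct.simps(2) last.simps last_in_set list.distinct(1))
      ultimately show ?thesis using True \<open>xs = b # xs'\<close> by simp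
    qed
  next
    case False
    then have uxs: "u \<in> set xs" using Cons.prems by simp
    then have xsne: "xs \<noteq> []" by auto
    have ne: "insert_after u v xs \<noteq> []" using xsne by (simp add: insert_after_Nil_iff)
    have "path_cost c (insert_after u v (x # xs)) = c {x, hd xs} + path_cost c (insert_after u v xs)"
      using False path_cost_Cons[OF ne] hd_insert_after[OF xsne] by simp
    moreover have "path_cost c (x # xs) = c {x, hd xs} + path_cost c xs"
      using path_cost_Cons[OF xsne] .
    moreover have "last (insert_after u v (x # xs)) = last (insert_after u v xs)"
      using False ne by simp
    moreover have "last (x # xs) = last xs" using xsne by simp
    ultimately show ?thesis using Cons uxs by auto
  qed
qed

lemma tour_cost_insert_after:
  assumes L: "distinct L" "set L \<subseteq> V" "hd L = r" and u: "u \<in> set L"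
    and v: "v \<in> V" "v \<notin> set L" "v \<noteq> r" "u \<noteq> v"
  shows "path_cost c (insert_after u v L) + close_cost c (insert_after u v L)
    \<le> path_cost c L + close_cost c L + 2 * c {u, v}"
proof -
  let ?L = "insert_after u v L"
  have Lne: "L \<noteq> []" using u by auto
  have len: "length ?L = Suc (length L)" by (rule length_insert_after[OF u])
  have hd: "hd ?L = r" using hd_insert_after[OF Lne] L(3) by simp
  from path_cost_insert_after[OF L(1,2) u v(1,2)] show ?thesis
  proof (elim disjE conjE)
    assume ul: "u = last L" and pc: "path_cost c ?L = path_cost c L + c {u, v}"
      and ll: "last ?L = v"
    have cl: "close_cost c ?L = c {v, r}"
      unfolding close_cost_def using len ll hd Lne by (cases L) auto
    show ?thesis
    proof (cases "2 \<le> length L")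
      case True
      have ur: "u \<noteq> r" using hd_last_distinct[OF L(1) True] ul L(3) by simp
      have "c {v, r} \<le> c {v, u} + c {u, r}"
        using ur v L u Lne hd_in_set[OF Lne] by (intro tri) auto
      moreover have "close_cost c L = c {u, r}" unfolding close_cost_def using True ul L(3) by simp
      moreover have "c {v, u} = c {u, v}" by (simp add: insert_commute)
      ultimately show ?thesis using cl pc by simp
    next
      case False
      then have "L = [r]" using Lne L(3) by (cases L) (auto simp: Suc_le_eq)
      then have "u = r" using u by simp
      then show ?thesis using cl pc \<open>L = [r]\<close> by (simp add: close_cost_def insert_commute)
    qed
  next
    assume ul: "u \<noteq> last L" and pc: "path_cost c ?L \<le> path_cost c L + 2 * c {u, v}"
      and ll: "last ?L = last L"
    have "2 \<le> length L"
    proof (rule ccontr)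
      assume "\<not> 2 \<le> length L"
      then obtain z where "L = [z]" using Lne by (cases L) (auto simp: Suc_le_eq)
      then show False using ul u by simp
    qed
    then have "close_cost c ?L = close_cost c L" unfolding close_cost_def using len ll hd L(3) by simp
    then show ?thesis using pc by simp
  qed
qed

text \<open>Induction: remove a leaf v, tour the rest, insert v after its neighbour.\<close>
lemma tree_tour:
  "is_tree W F \<Longrightarrow> W \<subseteq> V \<Longrightarrow> r \<in> W \<Longrightarrow> \<exists>L. distinct L \<and> set L = W \<and> hd L = r \<and>
     path_cost c L + close_cost c L \<le> 2 * cost c F"
proof (induction "card W" arbitrary: W F rule: less_induct)
  case less
  have T: "is_tree W F" and WV: "W \<subseteq> V" and r: "r \<in> W" using less.prems by auto
  have fW: "finite W" and fF: "finite F" and FW: "F \<subseteq> edges_of W" using tree_finite[OF T] by auto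
  show ?case
  proof (cases "card W \<ge> 2")
    case False
    then have "card W = 1" using r fW by (metis One_nat_def card_0_eq empty_iff le_less_linear
          less_2_cases numeral_2_eq_2)
    then have Wr: "W = {r}" using r by (metis card_1_singletonE singletonD)
    then have "F = {}" using FW by (simp add: edges_of_singleton)
    then show ?thesis
      using Wr by (intro exI[of _ "[r]"]) (simp add: close_cost_def cost_def)
  next
    case True
    obtain v where v: "v \<in> W" "v \<noteq> r" "deg F v = 1" using tree_leaf[OF T True r] by blast
    obtain u where uv: "{u, v} \<in> F" "u \<noteq> v" "u \<in> W" and uniq: "\<forall>e\<in>F. v \<in> e \<longrightarrow> e = {u, v}"
      using leaf_edge[OF T v(3)] by blast
    have T': "is_tree (W - {v}) (F - {{u, v}})"
      by (rule tree_remove_leaf[OF T True v(1) uv(1,2) uniq])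
    have "card (W - {v}) < card W" using fW v(1) True by simp
    moreover have "W - {v} \<subseteq> V" "r \<in> W - {v}" using WV r v(2) by auto
    ultimately obtain L' where L': "distinct L'" "set L' = W - {v}" "hd L' = r"
        "path_cost c L' + close_cost c L' \<le> 2 * cost c (F - {{u, v}})"
      using less.hyps[OF _ T'] by blast
    have costF: "cost c F = cost c (F - {{u, v}}) + c {u, v}"
      unfolding cost_def using fF uv(1) by (simp add: sum.remove)
    have u': "u \<in> set L'" and v': "v \<notin> set L'" "v \<in> V" and L'V: "set L' \<subseteq> V"
      using L'(2) uv v WV by auto
    let ?L = "insert_after u v L'"
    have "distinct ?L" by (rule distinct_insert_after[OF L'(1) v'(1) u'])
    moreover have "set ?L = W" using set_insert_after[OF u'] L'(2) v(1) by auto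
    moreover have "hd ?L = r" using hd_insert_after[of L' u v] u' L'(3) by force
    moreover have "path_cost c ?L + close_cost c ?L \<le> 2 * cost c F"
      using tour_cost_insert_after[OF L'(1) L'V L'(3) u' v'(2,1) v(2) uv(2)] L'(4) costF by simp
    ultimately show ?thesis by (intro exI[of _ ?L]) simp
  qed
qed

end

section \<open>A cheap path through the terminals of a full component\<close>

text \<open>The minimum defining C_K is attained (there are finitely many candidate trees).\<close>
lemma fc_cost_attained:
  assumes fV: "finite V" and hf: "has_full_component V R K"
  obtains W F where "full_component V R K W F" "cost c F = fc_cost V R c K"
proof -
  define A where "A = {cost c F | W F. full_component V R K W F}"
  have "A \<subseteq> cost c ` Pow (edges_of V)"
  proof
    fix a assume "a \<in> A"
    then obtain W F where a: "a = cost c F" and fc: "full_component V R K W F"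
      unfolding A_def by blast
    have "W \<subseteq> V" "F \<subseteq> edges_of W" using fc unfolding full_component_def is_tree_def by auto
    then have "F \<subseteq> edges_of V" using edges_of_mono by blast
    then show "a \<in> cost c ` Pow (edges_of V)" using a by blast
  qed
  then have "finite A" using finite_edges_of[OF fV] finite_subset by blast
  moreover have "A \<noteq> {}" using hf unfolding has_full_component_def A_def by blast
  ultimately have "fc_cost V R c K \<in> A" unfolding fc_cost_def A_def[symmetric] by (rule Min_in)
  then show ?thesis using that unfolding A_def by auto
qed

text \<open>Step (1): each LP index K has a Hamiltonian path on K of cost at most 2 C_K.
  Tour a cheapest full component from a terminal, then shortcut to the terminals, which
  are exactly its leaves.\<close>
lemma full_component_path:
  fixes V R :: "'a set" and c :: "'a set \<Rightarrow> real"
  assumes fV: "finite V"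
    and nn: "\<And>e. e \<in> edges_of V \<Longrightarrow> 0 \<le> c e"
    and tri: "\<And>u v w. u \<in> V \<Longrightarrow> v \<in> V \<Longrightarrow> w \<in> V \<Longrightarrow> u \<noteq> v \<Longrightarrow> v \<noteq> w \<Longrightarrow> u \<noteq> w \<Longrightarrow>
           c {u, w} \<le> c {u, v} + c {v, w}"
    and K: "K \<in> lp_index V R"
  shows "\<exists>P. distinct P \<and> set P = K \<and> path_cost c P \<le> 2 * fc_cost V R c K"
proof -
  have K2: "2 \<le> card K" and hf: "has_full_component V R K" using K unfolding lp_index_def by auto
  obtain W F where fc: "full_component V R K W F" and cF: "cost c F = fc_cost V R c K"
    using fc_cost_attained[OF fV hf] .
  have WV: "W \<subseteq> V" and T: "is_tree W F" and KW: "K = {v \<in> W. deg F v = 1}"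
    using fc unfolding full_component_def by auto
  obtain k0 where k0: "k0 \<in> K" using K2 by fastforce
  then have k0W: "k0 \<in> W" using KW by blast
  obtain L where L: "distinct L" "set L = W" "hd L = k0"
      "path_cost c L + close_cost c L \<le> 2 * cost c F"
    using tree_tour[of V c, OF tri T WV k0W] by blast
  have Lne: "L \<noteq> []" using L(2) k0W by auto
  then obtain L0 where L0: "L = k0 # L0" using L(3) by (cases L) auto
  have LV: "set L \<subseteq> V" using L(2) WV by simp
  define P where "P = k0 # filter (\<lambda>z. z \<in> K) L0"
  have "distinct P" unfolding P_def using L(1) L0 by auto
  moreover have "set P = K"
    using L(1,2) L0 k0 KW unfolding P_def by auto
  moreover have "path_cost c P \<le> path_cost c L"
    unfolding P_def L0 using shortcut[of V c, OF tri nn] L(1) LV L0 by simp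
  moreover have "0 \<le> close_cost c L"
  proof (cases "2 \<le> length L")
    case True
    then have "{last L, hd L} \<in> edges_of V"
      using hd_last_distinct[OF L(1) True] LV Lne by (auto simp: in_edges_of)
    then show ?thesis unfolding close_cost_def using True nn by simp
  qed (simp add: close_cost_def)
  ultimately show ?thesis using L(4) cF by (intro exI[of _ P]) simp
qed

section \<open>From the hypergraphic LP to the subtour polytope\<close>

definition path_weight ::
    "'a set set \<Rightarrow> ('a set \<Rightarrow> real) \<Rightarrow> ('a set \<Rightarrow> 'a list) \<Rightarrow> 'a set \<Rightarrow> real" where
  "path_weight I x P e = (\<Sum>K\<in>I. x K * of_bool (e \<in> path_edges (P K)))"

lemma weight_in_path_weight:
  assumes fI: "finite I" and PR: "\<forall>K\<in>I. path_edges (P K) \<subseteq> edges_of R"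
    and SR: "S \<subseteq> R" and fR: "finite R"
  shows "weight_in (path_weight I x P) S =
    (\<Sum>K\<in>I. x K * real (card {e \<in> path_edges (P K). e \<subseteq> S}))"
proof -
  have fS: "finite (edges_of S)" using finite_edges_of finite_subset[OF SR fR] by blast
  have inside: "edges_of S \<inter> {e. e \<in> path_edges (P K)} = {e \<in> path_edges (P K). e \<subseteq> S}"
    if "K \<in> I" for K
  proof
    show "edges_of S \<inter> {e. e \<in> path_edges (P K)} \<subseteq> {e \<in> path_edges (P K). e \<subseteq> S}"
      using edges_of_sub by blast
    show "{e \<in> path_edges (P K). e \<subseteq> S} \<subseteq> edges_of S \<inter> {e. e \<in> path_edges (P K)}"
    proof
      fix e assume e: "e \<in> {e \<in> path_edges (P K). e \<subseteq> S}"
      then have "e \<in> edges_of R" using PR that by blast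
      then obtain a b where "e = {a, b}" "a \<noteq> b" by (rule edges_ofE)
      then show "e \<in> edges_of S \<inter> {e. e \<in> path_edges (P K)}" using e by (auto simp: in_edges_of)
    qed
  qed
  have "weight_in (path_weight I x P) S =
      (\<Sum>K\<in>I. x K * (\<Sum>e\<in>edges_of S. of_bool (e \<in> path_edges (P K))))"
    unfolding weight_in_def path_weight_def by (subst sum.swap) (simp add: sum_distrib_left)
  also have "\<dots> = (\<Sum>K\<in>I. x K * real (card {e \<in> path_edges (P K). e \<subseteq> S}))"
    using fS inside by (intro sum.cong) simp_all
  finally show ?thesis .
qed

lemma weighted_cost_path_weight:
  assumes fI: "finite I" and PR: "\<forall>K\<in>I. path_edges (P K) \<subseteq> edges_of R" and fR: "finite R"
  shows "weighted_cost_in c (path_weight I x P) R = (\<Sum>K\<in>I. x K * cost c (path_edges (P K)))"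
proof -
  have fE: "finite (edges_of R)" using finite_edges_of fR by blast
  have "weighted_cost_in c (path_weight I x P) R =
      (\<Sum>K\<in>I. x K * (\<Sum>e\<in>edges_of R. c e * of_bool (e \<in> path_edges (P K))))"
    unfolding weighted_cost_in_def path_weight_def sum_distrib_right
    by (subst sum.swap) (simp add: sum_distrib_left mult_ac)
  also have "\<dots> = (\<Sum>K\<in>I. x K * cost c (path_edges (P K)))"
  proof (rule sum.cong)
    fix K assume "K \<in> I"
    have "(\<Sum>e\<in>edges_of R. c e * of_bool (e \<in> path_edges (P K))) =
        (\<Sum>e\<in>edges_of R \<inter> {e. e \<in> path_edges (P K)}. c e)"
      using fE by simp
    also have "edges_of R \<inter> {e. e \<in> path_edges (P K)} = path_edges (P K)"
      using PR \<open>K \<in> I\<close> by blast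
    finally show "x K * (\<Sum>e\<in>edges_of R. c e * of_bool (e \<in> path_edges (P K))) =
        x K * cost c (path_edges (P K))"
      by (simp add: cost_def)
  qed simp
  finally show ?thesis .
qed

text \<open>Path weights satisfy the subtour inequalities whenever x satisfies the hypergraphic
  ones, since a path on K has at most |K \<inter> S| - 1 edges inside S.\<close>
lemma path_weight_inside:
  assumes fI: "finite I" and fR: "finite R" and xnn: "\<forall>K\<in>I. 0 \<le> x K"
    and P: "\<forall>K\<in>I. distinct (P K) \<and> set (P K) = K \<and> K \<subseteq> R" and SR: "S \<subseteq> R"
  shows "weight_in (path_weight I x P) S \<le>
    (\<Sum>K\<in>{K \<in> I. K \<inter> S \<noteq> {}}. x K * (real (card (K \<inter> S)) - 1))"
proof -
  have PR: "\<forall>K\<in>I. path_edges (P K) \<subseteq> edges_of R" using P path_edges_in by metis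
  have "weight_in (path_weight I x P) S \<le>
      (\<Sum>K\<in>I. if K \<inter> S \<noteq> {} then x K * (real (card (K \<inter> S)) - 1) else 0)"
    unfolding weight_in_path_weight[OF fI PR SR fR]
  proof (rule sum_mono)
    fix K assume K: "K \<in> I"
    have "card {e \<in> path_edges (P K). e \<subseteq> S} \<le> card (K \<inter> S) - 1"
      using path_edges_inside[of "P K" S] P K by simp
    moreover have "finite (K \<inter> S)" using P K SR by (intro finite_subset[OF _ fR]) auto
    ultimately have "real (card {e \<in> path_edges (P K). e \<subseteq> S}) \<le>
        (if K \<inter> S \<noteq> {} then real (card (K \<inter> S)) - 1 else 0)"
    proof (cases "K \<inter> S = {}")
      case False
      then have "1 \<le> card (K \<inter> S)" using \<open>finite (K \<inter> S)\<close> by (simp add: Suc_le_eq card_gt_0_iff)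
      then show ?thesis using False \<open>card {e \<in> path_edges (P K). e \<subseteq> S} \<le> card (K \<inter> S) - 1\<close>
        by (simp add: of_nat_diff)
    qed simp
    then show "x K * real (card {e \<in> path_edges (P K). e \<subseteq> S}) \<le>
        (if K \<inter> S \<noteq> {} then x K * (real (card (K \<inter> S)) - 1) else 0)"
      using mult_left_mono[OF _ bspec[OF xnn K]] by (cases "K \<inter> S = {}") simp_all
  qed
  also have "\<dots> = (\<Sum>K\<in>{K \<in> I. K \<inter> S \<noteq> {}}. x K * (real (card (K \<inter> S)) - 1))"
    by (rule sum.inter_filter[OF fI, symmetric])
  finally show ?thesis .
qed

text \<open>A path on K has exactly |K| - 1 edges, so the total weight matches the LP equation.\<close>
lemma path_weight_total:
  assumes fI: "finite I" and fR: "finite R"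
    and P: "\<forall>K\<in>I. distinct (P K) \<and> set (P K) = K \<and> K \<subseteq> R \<and> 2 \<le> card K"
  shows "weight_in (path_weight I x P) R = (\<Sum>K\<in>I. x K * (real (card K) - 1))"
proof -
  have PR: "\<forall>K\<in>I. path_edges (P K) \<subseteq> edges_of R" using P path_edges_in by metis
  have per_K: "x K * real (card {e \<in> path_edges (P K). e \<subseteq> R}) = x K * (real (card K) - 1)"
    if K: "K \<in> I" for K
  proof -
    have "{e \<in> path_edges (P K). e \<subseteq> R} = path_edges (P K)" using PR K edges_of_sub by blast
    moreover have "card (path_edges (P K)) = card K - 1"
      using card_path_edges[of "P K"] P K distinct_card[of "P K"] by simp
    moreover have "2 \<le> card K" using P K by blast
    ultimately show ?thesis by (simp add: of_nat_diff)
  qed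
  show ?thesis unfolding weight_in_path_weight[OF fI PR order_refl fR]
    by (rule sum.cong[OF refl per_K])
qed

lemma mst_le_path_weights:
  fixes I :: "'a set set" and x :: "'a set \<Rightarrow> real" and P :: "'a set \<Rightarrow> 'a list"
  assumes fI: "finite I" and fR: "finite R" and xnn: "\<forall>K\<in>I. 0 \<le> x K"
    and paths: "\<forall>K\<in>I. distinct (P K) \<and> set (P K) = K \<and> K \<subseteq> R \<and> 2 \<le> card K"
    and LP_sub: "\<forall>S. S \<subseteq> R \<and> S \<noteq> {} \<longrightarrow>
      (\<Sum>K\<in>{K \<in> I. K \<inter> S \<noteq> {}}. x K * (real (card (K \<inter> S)) - 1)) \<le> real (card S) - 1"
    and LP_eq: "(\<Sum>K\<in>I. x K * (real (card K) - 1)) = real (card R) - 1"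
  shows "mst_cost R c \<le> (\<Sum>K\<in>I. x K * path_cost c (P K))"
proof -
  let ?y = "path_weight I x P"
  have PR: "\<forall>K\<in>I. path_edges (P K) \<subseteq> edges_of R" using paths path_edges_in by metis
  have "mst_cost R c \<le> weighted_cost_in c ?y R"
  proof (rule mst_le_subtour_point[OF fR])
    show "\<forall>e\<in>edges_of R. 0 \<le> ?y e" unfolding path_weight_def using xnn by (simp add: sum_nonneg)
    show "\<forall>S. S \<subseteq> R \<and> S \<noteq> {} \<longrightarrow> weight_in ?y S \<le> real (card S) - 1"
    proof (intro allI impI)
      fix S assume S: "S \<subseteq> R \<and> S \<noteq> {}"
      have "weight_in ?y S \<le> (\<Sum>K\<in>{K \<in> I. K \<inter> S \<noteq> {}}. x K * (real (card (K \<inter> S)) - 1))"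
        using paths by (intro path_weight_inside[OF fI fR xnn _ conjunct1[OF S]]) blast
      also have "\<dots> \<le> real (card S) - 1" using LP_sub S by blast
      finally show "weight_in ?y S \<le> real (card S) - 1" .
    qed
    show "weight_in ?y R = real (card R) - 1"
      using path_weight_total[OF fI fR paths] LP_eq by simp
  qed
  also have "weighted_cost_in c ?y R = (\<Sum>K\<in>I. x K * path_cost c (P K))"
    unfolding weighted_cost_path_weight[OF fI PR fR]
  proof (intro sum.cong refl)
    fix K assume "K \<in> I"
    then have "distinct (P K)" using paths by blast
    then show "x K * cost c (path_edges (P K)) = x K * path_cost c (P K)"
      by (simp add: cost_path_edges)
  qed
  finally show ?thesis .
qed

theorem lemma2:
  fixes V R :: "'a set" and c :: "'a set \<Rightarrow> real" and x :: "'a set \<Rightarrow> real"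
  assumes "finite V"
    and "R \<subseteq> V"
    and "\<And>e. e \<in> edges_of V \<Longrightarrow> 0 \<le> c e"
    and "\<And>u v w. u \<in> V \<Longrightarrow> v \<in> V \<Longrightarrow> w \<in> V \<Longrightarrow> u \<noteq> v \<Longrightarrow> v \<noteq> w \<Longrightarrow> u \<noteq> w \<Longrightarrow>
           c {u, w} \<le> c {u, v} + c {v, w}"
    and "hyp_feasible V R x"
  shows "mst_cost R c \<le> 2 * hyp_objective V R c x"
proof -
  define I where "I = lp_index V R"
  have fR: "finite R" using finite_subset[OF assms(2,1)] .
  have IR: "\<forall>K\<in>I. K \<subseteq> R \<and> 2 \<le> card K" unfolding I_def lp_index_def by auto
  have fI: "finite I" using IR fR by (intro finite_subset[of I "Pow R"]) auto
  have xnn: "\<forall>K\<in>I. 0 \<le> x K"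
    and LP_sub: "\<forall>S. S \<subseteq> R \<and> S \<noteq> {} \<longrightarrow>
      (\<Sum>K\<in>{K \<in> I. K \<inter> S \<noteq> {}}. x K * (real (card (K \<inter> S)) - 1)) \<le> real (card S) - 1"
    and LP_eq: "(\<Sum>K\<in>I. x K * (real (card K) - 1)) = real (card R) - 1"
    using assms(5) unfolding hyp_feasible_def I_def by blast+
  have "\<forall>K\<in>I. \<exists>P. distinct P \<and> set P = K \<and> path_cost c P \<le> 2 * fc_cost V R c K"
    using full_component_path[of V c, OF assms(1,3,4)] unfolding I_def by blast
  then obtain P where P: "\<forall>K\<in>I. distinct (P K) \<and> set (P K) = K \<and> path_cost c (P K) \<le> 2 * fc_cost V R c K"
    by metis
  then have "\<forall>K\<in>I. distinct (P K) \<and> set (P K) = K \<and> K \<subseteq> R \<and> 2 \<le> card K" using IR by blast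
  then have "mst_cost R c \<le> (\<Sum>K\<in>I. x K * path_cost c (P K))"
    by (rule mst_le_path_weights[OF fI fR xnn _ LP_sub LP_eq])
  also have "\<dots> \<le> (\<Sum>K\<in>I. x K * (2 * fc_cost V R c K))"
    using P xnn by (intro sum_mono mult_left_mono) auto
  also have "\<dots> = 2 * hyp_objective V R c x"
    unfolding hyp_objective_def I_def[symmetric] by (simp add: sum_distrib_left mult_ac)
  finally show ?thesis .
qed

end
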